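(* For $2\le p\le\infty$, \[ \limsup_{d\to\infty}\frac{\mathrm{rad}(\mathbb D_p^d)}{\sqrt d\,L_{\mathbb D_p^d}}\le\sqrt3. \]
   Context: $\mathbb B_p^d=\{x\in\mathbb R^d:\|x\|_p\le1\}$ and $\mathbb D_p^d=\mathbb B_p^d/\mathrm{vol}_d(\mathbb B_p^d)^{1/d}$. For a symmetric set $A$, $\mathrm{rad}(A)=\sup_{y\in A}\|y\|_2$. For an isotropic convex body $K$ (volume one, centroid at the origin), the isotropic constant $L_K>0$ is defined by $\int_K\langle x,\theta\rangle^2\,dx=L_K^2$ for all $\theta\in\mathbb S^{d-1}$; $\mathbb D_p^d$ is isotropic. *)

theory Defs
  imports "HOL-Analysis.Analysis"
begin

text \<open>Vectors in R^d are represented as extensional functions nat => real on {..<d};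
  Lebesgue measure on R^d is the product measure of d copies of lborel.\<close>

definition Leb :: "nat \<Rightarrow> (nat \<Rightarrow> real) measure" where
  "Leb d = PiM {..<d} (\<lambda>_. lborel)"

definition pnorm :: "ereal \<Rightarrow> nat \<Rightarrow> (nat \<Rightarrow> real) \<Rightarrow> real" where
  "pnorm p d x = (if p = \<infinity> then Max (insert 0 ((\<lambda>i. \<bar>x i\<bar>) ` {..<d}))
                  else (\<Sum>i<d. \<bar>x i\<bar> powr real_of_ereal p) powr (1 / real_of_ereal p))"

definition Bp :: "nat \<Rightarrow> ereal \<Rightarrow> (nat \<Rightarrow> real) set" where
  "Bp d p = {x \<in> space (Leb d). pnorm p d x \<le> 1}"

definition Dp :: "nat \<Rightarrow> ereal \<Rightarrow> (nat \<Rightarrow> real) set" where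
  "Dp d p = (\<lambda>x. restrict (\<lambda>i. x i / measure (Leb d) (Bp d p) powr (1 / real d)) {..<d}) ` Bp d p"

definition rad :: "nat \<Rightarrow> (nat \<Rightarrow> real) set \<Rightarrow> real" where
  "rad d A = Sup ((\<lambda>y. sqrt (\<Sum>i<d. (y i)\<^sup>2)) ` A)"

definition isotropic_constant :: "nat \<Rightarrow> (nat \<Rightarrow> real) set \<Rightarrow> real" where
  "isotropic_constant d K = (THE L. L > 0 \<and> (\<forall>\<theta>::nat \<Rightarrow> real. (\<Sum>i<d. (\<theta> i)\<^sup>2) = 1 \<longrightarrow>
      (LINT x:K|Leb d. (\<Sum>i<d. x i * \<theta> i)\<^sup>2) = L\<^sup>2))"

end

theory Submission
  imports Defs
begin

text \<open>
  For \<open>2 \<le> r < \<infinity>\<close> the ball \<open>B = B\<^sub>r\<^sup>d\<close> is computed exactly through the layer-cake identity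
  \<open>\<integral> exp (- \<parallel>x\<parallel>\<^sub>r\<^sup>r) g x dx = \<Gamma> ((d + k) / r + 1) \<integral>\<^sub>B g\<close> for \<open>k\<close>-homogeneous \<open>g \<ge> 0\<close>, whose
  left-hand side factorises over the coordinates. With \<open>g = 1\<close> and \<open>g = \<langle>x, \<theta>\<rangle>\<^sup>2\<close> this gives
  \<open>vol B = (2 \<Gamma> (1/r + 1))\<^sup>d / \<Gamma> (d/r + 1)\<close> and the second moment of \<open>B\<close> in every direction,
  while Hoelder's inequality gives \<open>rad B \<le> d powr (1/2 - 1/r)\<close>. The ratio \<open>rad K / (\<surd>d L\<^sub>K)\<close>
  is unchanged by the volume normalisation, so it is bounded by a quotient of Gamma values, which
  log-convexity of \<open>\<Gamma>\<close> (Wendel's inequality) bounds by \<open>\<surd>3 (1 + r/d) powr (1/r) \<longrightarrow> \<surd>3\<close>.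
  For \<open>r = \<infinity>\<close> the cube gives exactly \<open>\<surd>3\<close>.
\<close>

section \<open>Dilations of Lebesgue measure\<close>

abbreviation dilate :: "nat \<Rightarrow> real \<Rightarrow> (nat \<Rightarrow> real) \<Rightarrow> nat \<Rightarrow> real" where
  "dilate d c x \<equiv> restrict (\<lambda>i. c * x i) {..<d}"

lemma space_Leb: "space (Leb d) = PiE {..<d} (\<lambda>_. UNIV)"
  by (simp add: Leb_def space_PiM)

lemma measurable_quadratic_form [measurable]:
  "(\<lambda>x. (\<Sum>i<d. x i * \<theta> i)\<^sup>2) \<in> borel_measurable (Leb d)"
  unfolding Leb_def by measurable

lemma measurable_dilate [measurable]: "dilate d c \<in> Leb d \<rightarrow>\<^sub>M Leb d"
  unfolding Leb_def by measurable

lemma emeasure_lborel_vimage_mult: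
  fixes c :: real assumes c: "c > 0" and A: "A \<in> sets lborel"
  shows "emeasure lborel {x. c * x \<in> A} = ennreal (1 / c) * emeasure lborel A"
proof -
  have "emeasure (distr lborel borel ((*) c)) A = emeasure (density lborel (\<lambda>_. inverse \<bar>c\<bar>)) A"
    using lborel_distr_mult[of c] c by simp
  also have "\<dots> = ennreal (1 / c) * emeasure lborel A"
    using A c by (simp add: emeasure_density_const field_simps)
  finally show ?thesis using A by (simp add: emeasure_distr vimage_def)
qed

lemma distr_dilate_Leb:
  fixes c :: real assumes c: "c > 0"
  shows "scale_measure (ennreal (c ^ d)) (distr (Leb d) (Leb d) (dilate d c)) = Leb d"
proof -
  interpret product_sigma_finite "\<lambda>_. lborel" by standard
  show ?thesis unfolding Leb_def
  proof (rule PiM_eqI)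
    fix A :: "nat \<Rightarrow> real set" assume A: "\<And>i. i \<in> {..<d} \<Longrightarrow> A i \<in> sets lborel"
    have A_vimage: "{x. c * x \<in> A i} \<in> sets lborel" if "i < d" for i
      using measurable_sets[of "(*) c" borel borel "A i"] A that by (simp add: vimage_def)
    have "(dilate d c) -` PiE {..<d} A \<inter> space (PiM {..<d} (\<lambda>_. lborel))
        = PiE {..<d} (\<lambda>i. {x. c * x \<in> A i})"
      by (auto simp: space_PiM PiE_def Pi_def extensional_def)
    moreover have "PiE {..<d} A \<in> sets (PiM {..<d} (\<lambda>_. lborel))"
      using A by (intro sets_PiM_I_finite) auto
    moreover have "emeasure (PiM {..<d} (\<lambda>_. lborel)) (PiE {..<d} (\<lambda>i. {x. c * x \<in> A i}))
        = (\<Prod>i<d. emeasure lborel {x. c * x \<in> A i})"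
      using A_vimage by (intro emeasure_PiM) auto
    ultimately have "emeasure (scale_measure (ennreal (c ^ d))
        (distr (PiM {..<d} (\<lambda>_. lborel)) (PiM {..<d} (\<lambda>_. lborel)) (dilate d c))) (PiE {..<d} A)
      = ennreal (c ^ d) * (\<Prod>i<d. emeasure lborel {x. c * x \<in> A i})"
      using measurable_dilate unfolding Leb_def by (simp add: emeasure_distr)
    also have "\<dots> = ennreal (c ^ d) * (\<Prod>i<d. ennreal (1 / c) * emeasure lborel (A i))"
      using A c by (simp add: emeasure_lborel_vimage_mult)
    also have "\<dots> = ennreal (c ^ d * (1 / c) ^ d) * (\<Prod>i<d. emeasure lborel (A i))"
      using c by (simp add: prod.distrib ennreal_power ennreal_mult mult.assoc)
    also have "\<dots> = (\<Prod>i<d. emeasure lborel (A i))"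
      using c by (simp add: power_mult_distrib[symmetric])
    finally show "emeasure (scale_measure (ennreal (c ^ d))
        (distr (PiM {..<d} (\<lambda>_. lborel)) (PiM {..<d} (\<lambda>_. lborel)) (dilate d c))) (PiE {..<d} A)
      = (\<Prod>i<d. emeasure lborel (A i))" .
  qed simp_all
qed

lemma nn_integral_Leb_dilate:
  fixes c :: real assumes c: "c > 0" and f [measurable]: "f \<in> borel_measurable (Leb d)"
  shows "(\<integral>\<^sup>+x. f x \<partial>Leb d) = ennreal (c ^ d) * (\<integral>\<^sup>+x. f (dilate d c x) \<partial>Leb d)"
proof -
  have "(\<integral>\<^sup>+x. f x \<partial>Leb d)
      = (\<integral>\<^sup>+x. f x \<partial>scale_measure (ennreal (c ^ d)) (distr (Leb d) (Leb d) (dilate d c)))"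
    by (simp only: distr_dilate_Leb[OF c])
  also have "\<dots> = ennreal (c ^ d) * (\<integral>\<^sup>+x. f (dilate d c x) \<partial>Leb d)"
    by (simp add: nn_integral_scale_measure nn_integral_distr)
  finally show ?thesis .
qed

lemma image_divide_eq_vimage_dilate:
  fixes c :: real assumes c: "c > 0" and S: "S \<subseteq> space (Leb d)"
  shows "(\<lambda>x. restrict (\<lambda>i. x i / c) {..<d}) ` S = dilate d c -` S \<inter> space (Leb d)"
proof (intro set_eqI iffI)
  fix y assume "y \<in> (\<lambda>x. restrict (\<lambda>i. x i / c) {..<d}) ` S"
  then obtain x where x: "x \<in> S" "y = restrict (\<lambda>i. x i / c) {..<d}" by blast
  have "dilate d c y = x"
    using x S c by (auto simp: space_Leb PiE_def extensional_def fun_eq_iff)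
  then show "y \<in> dilate d c -` S \<inter> space (Leb d)" using x by (auto simp: space_Leb)
next
  fix y assume y: "y \<in> dilate d c -` S \<inter> space (Leb d)"
  then have "y = restrict (\<lambda>i. dilate d c y i / c) {..<d}"
    using c by (auto simp: space_Leb PiE_def extensional_def fun_eq_iff)
  then show "y \<in> (\<lambda>x. restrict (\<lambda>i. x i / c) {..<d}) ` S" using y by blast
qed

lemma nn_integral_quadratic_image_divide:
  fixes c :: real assumes c: "c > 0" and S [measurable]: "S \<in> sets (Leb d)"
  defines "D \<equiv> (\<lambda>x. restrict (\<lambda>i. x i / c) {..<d}) ` S"
  shows "D \<in> sets (Leb d)"
    and "ennreal (c ^ (d + 2)) * (\<integral>\<^sup>+y. ennreal (indicator D y * (\<Sum>i<d. y i * \<theta> i)\<^sup>2) \<partial>Leb d)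
       = (\<integral>\<^sup>+x. ennreal (indicator S x * (\<Sum>i<d. x i * \<theta> i)\<^sup>2) \<partial>Leb d)"
proof -
  have D_eq: "D = dilate d c -` S \<inter> space (Leb d)"
    unfolding D_def using c sets.sets_into_space[OF S] by (rule image_divide_eq_vimage_dilate)
  have c_split: "ennreal (c ^ (d + 2)) = ennreal (c ^ d) * ennreal (c\<^sup>2)"
    unfolding power_add using c by (intro ennreal_mult) auto
  show D [measurable]: "D \<in> sets (Leb d)"
    unfolding D_eq by (rule measurable_sets[OF measurable_dilate S])
  have "(\<integral>\<^sup>+x. ennreal (indicator S x * (\<Sum>i<d. x i * \<theta> i)\<^sup>2) \<partial>Leb d)
      = ennreal (c ^ d) * (\<integral>\<^sup>+y. ennreal (indicator S (dilate d c y)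
          * (\<Sum>i<d. dilate d c y i * \<theta> i)\<^sup>2) \<partial>Leb d)"
    by (rule nn_integral_Leb_dilate[OF c]) measurable
  also have "(\<integral>\<^sup>+y. ennreal (indicator S (dilate d c y) * (\<Sum>i<d. dilate d c y i * \<theta> i)\<^sup>2) \<partial>Leb d)
      = (\<integral>\<^sup>+y. ennreal (c\<^sup>2) * ennreal (indicator D y * (\<Sum>i<d. y i * \<theta> i)\<^sup>2) \<partial>Leb d)"
  proof (rule nn_integral_cong)
    fix y assume y: "y \<in> space (Leb d)"
    have "(\<Sum>i<d. dilate d c y i * \<theta> i) = c * (\<Sum>i<d. y i * \<theta> i)"
      by (simp add: sum_distrib_left mult.assoc)
    moreover have "indicator S (dilate d c y) = (indicator D y :: real)"
      using y by (simp add: D_eq indicator_def)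
    ultimately show "ennreal (indicator S (dilate d c y) * (\<Sum>i<d. dilate d c y i * \<theta> i)\<^sup>2)
        = ennreal (c\<^sup>2) * ennreal (indicator D y * (\<Sum>i<d. y i * \<theta> i)\<^sup>2)"
      by (simp add: ennreal_mult'[symmetric] power_mult_distrib mult_ac)
  qed
  also have "\<dots> = ennreal (c\<^sup>2) * (\<integral>\<^sup>+y. ennreal (indicator D y * (\<Sum>i<d. y i * \<theta> i)\<^sup>2) \<partial>Leb d)"
    by (rule nn_integral_cmult) measurable
  finally have "(\<integral>\<^sup>+x. ennreal (indicator S x * (\<Sum>i<d. x i * \<theta> i)\<^sup>2) \<partial>Leb d)
      = ennreal (c ^ d) * (ennreal (c\<^sup>2)
        * (\<integral>\<^sup>+y. ennreal (indicator D y * (\<Sum>i<d. y i * \<theta> i)\<^sup>2) \<partial>Leb d))" .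
  then show "ennreal (c ^ (d + 2)) * (\<integral>\<^sup>+y. ennreal (indicator D y * (\<Sum>i<d. y i * \<theta> i)\<^sup>2) \<partial>Leb d)
      = (\<integral>\<^sup>+x. ennreal (indicator S x * (\<Sum>i<d. x i * \<theta> i)\<^sup>2) \<partial>Leb d)"
    by (simp only: c_split mult.assoc)
qed

lemma ennreal_eq_divide_of_mult_eq:
  fixes a b :: real
  assumes a: "a > 0" and b: "b \<ge> 0" and eq: "ennreal a * x = ennreal b"
  shows "x = ennreal (b / a)"
proof -
  have "x = ennreal (1 / a) * (ennreal a * x)"
    using a by (simp add: mult.assoc[symmetric] ennreal_mult'[symmetric])
  also have "\<dots> = ennreal (b / a)" using a b by (simp add: eq ennreal_mult'[symmetric])
  finally show ?thesis .
qed

lemma isotropic_constant_eqI: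
  assumes d: "d > 0" and L: "L > 0"
    and moment: "\<And>\<theta>. (\<Sum>i<d. (\<theta> i)\<^sup>2) = 1 \<Longrightarrow> (LINT x:K|Leb d. (\<Sum>i<d. x i * \<theta> i)\<^sup>2) = L\<^sup>2"
  shows "isotropic_constant d K = L"
  unfolding isotropic_constant_def
proof (rule the_equality)
  fix L' assume L': "0 < L' \<and> (\<forall>\<theta>. (\<Sum>i<d. (\<theta> i)\<^sup>2) = 1 \<longrightarrow>
      (LINT x:K|Leb d. (\<Sum>i<d. x i * \<theta> i)\<^sup>2) = L'\<^sup>2)"
  define e :: "nat \<Rightarrow> real" where "e i = (if i = 0 then 1 else 0)" for i
  have "(\<Sum>i<d. (e i)\<^sup>2) = (\<Sum>i<d. if i = 0 then 1 else 0)"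
    by (intro sum.cong) (auto simp: e_def)
  also have "\<dots> = 1" using d by simp
  finally have e_unit: "(\<Sum>i<d. (e i)\<^sup>2) = 1" .
  have "L'\<^sup>2 = L\<^sup>2"
    using L'[THEN conjunct2, rule_format, OF e_unit] moment[OF e_unit] by simp
  then show "L' = L" using L L' by simp
qed (use L moment in simp)

lemma rad_le:
  assumes "A \<noteq> {}" "R \<ge> 0" "\<And>y. y \<in> A \<Longrightarrow> (\<Sum>i<d. (y i)\<^sup>2) \<le> R\<^sup>2"
  shows "rad d A \<le> R"
  unfolding rad_def
proof (rule cSup_least)
  fix s assume "s \<in> (\<lambda>y. sqrt (\<Sum>i<d. (y i)\<^sup>2)) ` A"
  then obtain y where y: "y \<in> A" and s: "s = sqrt (\<Sum>i<d. (y i)\<^sup>2)" by blast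
  have "sqrt (\<Sum>i<d. (y i)\<^sup>2) \<le> sqrt (R\<^sup>2)" by (rule real_sqrt_le_mono[OF assms(3)[OF y]])
  then show "s \<le> R" using s assms(2) by simp
qed (use assms(1) in simp)

lemma set_integral_quadratic_image_divide:
  fixes c J :: real
  assumes c: "c > 0" and S: "S \<in> sets (Leb d)" and J: "J \<ge> 0"
    and moment: "(\<integral>\<^sup>+x. ennreal (indicator S x * (\<Sum>i<d. x i * \<theta> i)\<^sup>2) \<partial>Leb d) = ennreal J"
  shows "(LINT y:(\<lambda>x. restrict (\<lambda>i. x i / c) {..<d}) ` S|Leb d. (\<Sum>i<d. y i * \<theta> i)\<^sup>2)
       = J / c ^ (d + 2)"
proof -
  let ?D = "(\<lambda>x. restrict (\<lambda>i. x i / c) {..<d}) ` S"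
  note D = nn_integral_quadratic_image_divide[OF c S]
  have "(\<integral>\<^sup>+y. ennreal (indicator ?D y * (\<Sum>i<d. y i * \<theta> i)\<^sup>2) \<partial>Leb d) = ennreal (J / c ^ (d + 2))"
    by (rule ennreal_eq_divide_of_mult_eq[OF _ J]) (use c D(2)[where \<theta> = \<theta>] moment in auto)
  moreover have "(LINT y:?D|Leb d. (\<Sum>i<d. y i * \<theta> i)\<^sup>2)
      = enn2real (\<integral>\<^sup>+y. ennreal (indicator ?D y * (\<Sum>i<d. y i * \<theta> i)\<^sup>2) \<partial>Leb d)"
    unfolding set_lebesgue_integral_def real_scaleR_def
    by (intro integral_eq_nn_integral AE_I2 borel_measurable_times) (use D(1) in simp_all)
  ultimately show ?thesis using c J by simp
qed

lemma rad_image_divide_le: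
  fixes c R :: real
  assumes c: "c > 0" and S: "S \<noteq> {}"
    and R: "R \<ge> 0" "\<And>x. x \<in> S \<Longrightarrow> (\<Sum>i<d. (x i)\<^sup>2) \<le> R\<^sup>2"
  shows "rad d ((\<lambda>x. restrict (\<lambda>i. x i / c) {..<d}) ` S) \<le> R / c"
proof (rule rad_le)
  fix y assume "y \<in> (\<lambda>x. restrict (\<lambda>i. x i / c) {..<d}) ` S"
  then obtain x where x: "x \<in> S" "y = restrict (\<lambda>i. x i / c) {..<d}" by blast
  have "(\<Sum>i<d. (y i)\<^sup>2) = (\<Sum>i<d. (x i)\<^sup>2) / c\<^sup>2"
    by (simp add: x(2) power_divide sum_divide_distrib)
  also have "\<dots> \<le> R\<^sup>2 / c\<^sup>2"
    using R(2)[OF x(1)] by (rule divide_right_mono) simp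
  finally show "(\<Sum>i<d. (y i)\<^sup>2) \<le> (R / c)\<^sup>2"
    by (simp add: power_divide)
qed (use S R c in simp_all)

definition volume_normalized :: "nat \<Rightarrow> (nat \<Rightarrow> real) set \<Rightarrow> (nat \<Rightarrow> real) set" where
  "volume_normalized d S = (\<lambda>x. restrict (\<lambda>i. x i / measure (Leb d) S powr (1 / real d)) {..<d}) ` S"

lemma Dp_eq_volume_normalized: "Dp d p = volume_normalized d (Bp d p)"
  by (simp add: Dp_def volume_normalized_def)

lemma isotropic_ratio_volume_normalized_le:
  fixes S :: "(nat \<Rightarrow> real) set" and J R :: real
  assumes d: "d > 0" and S: "S \<in> sets (Leb d)" and S_pos: "measure (Leb d) S > 0"
    and J: "J > 0" "\<And>\<theta>. (\<Sum>i<d. (\<theta> i)\<^sup>2) = 1 \<Longrightarrow>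
        (\<integral>\<^sup>+x. ennreal (indicator S x * (\<Sum>i<d. x i * \<theta> i)\<^sup>2) \<partial>Leb d) = ennreal J"
    and R: "R \<ge> 0" "\<And>x. x \<in> S \<Longrightarrow> (\<Sum>i<d. (x i)\<^sup>2) \<le> R\<^sup>2"
  shows "rad d (volume_normalized d S) / (sqrt (real d) * isotropic_constant d (volume_normalized d S))
      \<le> R * sqrt (measure (Leb d) S / (real d * J))"
proof -
  define V where "V = measure (Leb d) S"
  define c where "c = V powr (1 / real d)"
  have V: "V > 0" using S_pos by (simp add: V_def)
  have c: "c > 0" using V by (simp add: c_def)
  have "c ^ d = V" using V d by (simp add: c_def powr_realpow[symmetric] powr_powr)
  then have c_power: "c ^ (d + 2) = V * c\<^sup>2" by (simp add: power_add power2_eq_square)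
  have D: "volume_normalized d S = (\<lambda>x. restrict (\<lambda>i. x i / c) {..<d}) ` S"
    by (simp add: volume_normalized_def c_def V_def)
  have "(LINT y:volume_normalized d S|Leb d. (\<Sum>i<d. y i * \<theta> i)\<^sup>2) = J / (V * c\<^sup>2)"
    if "(\<Sum>i<d. (\<theta> i)\<^sup>2) = 1" for \<theta>
    unfolding D c_power[symmetric]
    by (rule set_integral_quadratic_image_divide[OF c S less_imp_le[OF J(1)] J(2)[OF that]])
  then have L: "isotropic_constant d (volume_normalized d S) = sqrt (J / (V * c\<^sup>2))"
    using d J(1) c V by (intro isotropic_constant_eqI) simp_all
  have "rad d (volume_normalized d S) \<le> R / c"
    unfolding D using S_pos R by (intro rad_image_divide_le[OF c]) auto
  then have "rad d (volume_normalized d S) / (sqrt (real d) * isotropic_constant d (volume_normalized d S))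
      \<le> (R / c) / (sqrt (real d) * sqrt (J / (V * c\<^sup>2)))"
    unfolding L using d c V J by (intro divide_right_mono) auto
  also have "\<dots> = R * sqrt (V / (real d * J))"
    using c V J d by (simp add: real_sqrt_divide real_sqrt_mult field_simps)
  finally show ?thesis unfolding V_def .
qed

section \<open>Second moments of product densities\<close>

lemma integral_prod_weight_coordinates:
  fixes w :: "real \<Rightarrow> real"
  assumes w_int: "\<And>n. integrable lborel (\<lambda>t. w t * t ^ n)"
    and w_odd: "(LINT t|lborel. w t * t) = 0"
    and ij: "i < d" "j < d"
  shows "integrable (Leb d) (\<lambda>x. (\<Prod>k<d. w (x k)) * (x i * x j))"
    and "(\<integral>x. (\<Prod>k<d. w (x k)) * (x i * x j) \<partial>Leb d)
       = (if i = j then (LINT t|lborel. w t * t\<^sup>2) * (LINT t|lborel. w t) ^ (d - 1) else 0)"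
proof -
  interpret product_sigma_finite "\<lambda>_. lborel" by standard
  define f where "f k t = w t * (if k = i then t else 1) * (if k = j then t else 1)" for k t
  have f_eq: "f k = (if k = i \<and> k = j then (\<lambda>t. w t * t ^ 2)
      else if k = i \<or> k = j then (\<lambda>t. w t * t ^ 1) else (\<lambda>t. w t * t ^ 0))" for k
    by (auto simp: f_def fun_eq_iff power2_eq_square)
  have f_int: "integrable lborel (f k)" for k
    using w_int[of 0] w_int[of 1] w_int[of 2] unfolding f_eq by simp
  have prod_f: "(\<Prod>k<d. f k (x k)) = (\<Prod>k<d. w (x k)) * (x i * x j)" for x
    using ij by (simp add: f_def prod.distrib prod.delta)
  show "integrable (Leb d) (\<lambda>x. (\<Prod>k<d. w (x k)) * (x i * x j))"
    using product_integrable_prod[of "{..<d}" f] f_int by (simp add: Leb_def prod_f)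
  have "(\<integral>x. (\<Prod>k<d. w (x k)) * (x i * x j) \<partial>Leb d) = (\<Prod>k<d. LINT t|lborel. f k t)"
    using product_integral_prod[of "{..<d}" f] f_int by (simp add: Leb_def prod_f)
  also have "\<dots> = (if i = j then (LINT t|lborel. w t * t\<^sup>2) * (LINT t|lborel. w t) ^ (d - 1) else 0)"
  proof (cases "i = j")
    case True
    have "(\<Prod>k<d. LINT t|lborel. f k t)
        = (LINT t|lborel. f i t) * (\<Prod>k\<in>{..<d} - {i}. LINT t|lborel. f k t)"
      using ij by (simp add: prod.remove)
    also have "(\<Prod>k\<in>{..<d} - {i}. LINT t|lborel. f k t) = (LINT t|lborel. w t) ^ (d - 1)"
      using True ij by (simp add: f_eq)
    finally show ?thesis using True by (simp add: f_eq)
  next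
    case False
    then have "(LINT t|lborel. f i t) = 0" by (simp add: f_eq w_odd)
    then show ?thesis using False ij by (auto intro!: prod_zero bexI[of _ i])
  qed
  finally show "(\<integral>x. (\<Prod>k<d. w (x k)) * (x i * x j) \<partial>Leb d)
       = (if i = j then (LINT t|lborel. w t * t\<^sup>2) * (LINT t|lborel. w t) ^ (d - 1) else 0)" .
qed

lemma integral_prod_weight_quadratic:
  fixes w :: "real \<Rightarrow> real" and \<theta> :: "nat \<Rightarrow> real"
  assumes w_int: "\<And>n. integrable lborel (\<lambda>t. w t * t ^ n)"
    and w_odd: "(LINT t|lborel. w t * t) = 0"
  shows "integrable (Leb d) (\<lambda>x. (\<Prod>k<d. w (x k)) * (\<Sum>i<d. x i * \<theta> i)\<^sup>2)"
    and "(\<integral>x. (\<Prod>k<d. w (x k)) * (\<Sum>i<d. x i * \<theta> i)\<^sup>2 \<partial>Leb d)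
       = (\<Sum>i<d. (\<theta> i)\<^sup>2) * (LINT t|lborel. w t * t\<^sup>2) * (LINT t|lborel. w t) ^ (d - 1)"
proof -
  note coordinates = integral_prod_weight_coordinates[OF w_int w_odd]
  have expand: "(\<Prod>k<d. w (x k)) * (\<Sum>i<d. x i * \<theta> i)\<^sup>2
      = (\<Sum>i<d. \<Sum>j<d. \<theta> i * \<theta> j * ((\<Prod>k<d. w (x k)) * (x i * x j)))" for x :: "nat \<Rightarrow> real"
    by (simp add: power2_eq_square sum_product sum_distrib_left mult_ac)
  have term_int: "integrable (Leb d) (\<lambda>x. \<theta> i * \<theta> j * ((\<Prod>k<d. w (x k)) * (x i * x j)))"
    if "i \<in> {..<d}" "j \<in> {..<d}" for i j
    using that by (simp add: coordinates(1))
  show "integrable (Leb d) (\<lambda>x. (\<Prod>k<d. w (x k)) * (\<Sum>i<d. x i * \<theta> i)\<^sup>2)"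
    unfolding expand by (intro Bochner_Integration.integrable_sum term_int)
  have "(\<integral>x. (\<Prod>k<d. w (x k)) * (\<Sum>i<d. x i * \<theta> i)\<^sup>2 \<partial>Leb d)
      = (\<Sum>i<d. \<Sum>j<d. \<integral>x. \<theta> i * \<theta> j * ((\<Prod>k<d. w (x k)) * (x i * x j)) \<partial>Leb d)"
    unfolding expand
    by (subst Bochner_Integration.integral_sum)
      (use term_int in \<open>auto intro!: Bochner_Integration.integrable_sum\<close>)
  also have "\<dots> = (\<Sum>i<d. \<Sum>j<d. \<theta> i * \<theta> j * (\<integral>x. (\<Prod>k<d. w (x k)) * (x i * x j) \<partial>Leb d))"
    by simp
  also have "\<dots> = (\<Sum>i<d. (\<theta> i)\<^sup>2 * ((LINT t|lborel. w t * t\<^sup>2) * (LINT t|lborel. w t) ^ (d - 1)))"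
    by (intro sum.cong refl) (simp add: coordinates(2) power2_eq_square if_distrib sum.delta cong: if_cong)
  also have "\<dots> = (\<Sum>i<d. (\<theta> i)\<^sup>2) * (LINT t|lborel. w t * t\<^sup>2) * (LINT t|lborel. w t) ^ (d - 1)"
    by (simp add: sum_distrib_right mult.assoc)
  finally show "(\<integral>x. (\<Prod>k<d. w (x k)) * (\<Sum>i<d. x i * \<theta> i)\<^sup>2 \<partial>Leb d)
       = (\<Sum>i<d. (\<theta> i)\<^sup>2) * (LINT t|lborel. w t * t\<^sup>2) * (LINT t|lborel. w t) ^ (d - 1)" .
qed

lemma nn_integral_prod_weight_quadratic:
  fixes w :: "real \<Rightarrow> real" and \<theta> :: "nat \<Rightarrow> real"
  assumes w_nonneg: "\<And>t. w t \<ge> 0" and w_int: "\<And>n. integrable lborel (\<lambda>t. w t * t ^ n)"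
    and w_odd: "(LINT t|lborel. w t * t) = 0"
  shows "(\<integral>\<^sup>+x. ennreal ((\<Prod>k<d. w (x k)) * (\<Sum>i<d. x i * \<theta> i)\<^sup>2) \<partial>Leb d)
       = ennreal ((\<Sum>i<d. (\<theta> i)\<^sup>2) * (LINT t|lborel. w t * t\<^sup>2) * (LINT t|lborel. w t) ^ (d - 1))"
  using integral_prod_weight_quadratic[OF w_int w_odd, of d \<theta>]
  by (subst nn_integral_eq_integral) (auto intro!: mult_nonneg_nonneg prod_nonneg w_nonneg)

section \<open>The cube\<close>

lemma indicator_PiE_eq_prod:
  assumes "finite I" "x \<in> extensional I"
  shows "indicator (PiE I A) x = (\<Prod>i\<in>I. indicator (A i) (x i) :: real)"
proof (cases "\<forall>i\<in>I. x i \<in> A i")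
  case True
  then show ?thesis using assms by (auto simp: PiE_def)
next
  case False
  then obtain i where "i \<in> I" "x i \<notin> A i" by blast
  then have "x \<notin> PiE I A" and "(\<Prod>i\<in>I. indicator (A i) (x i) :: real) = 0"
    using assms(1) by (auto intro!: prod_zero bexI[of _ i])
  then show ?thesis by simp
qed

lemma integrable_indicator_Icc_power:
  "integrable lborel (\<lambda>t::real. indicator {-1..1} t * t ^ n)"
  using borel_integrable_atLeastAtMost[of "-1" 1 "\<lambda>t. t ^ n"] by (simp add: mult.commute)

lemma integral_indicator_Icc_power:
  "(LINT t|lborel. indicator {-1..1} t * t ^ n) = (1 - (-1) ^ Suc n) / real (Suc n)"
  using integral_power[of "-1" 1 n] by (simp add: mult.commute)

lemma Bp_infinity: "Bp d \<infinity> = PiE {..<d} (\<lambda>_. {-1..1::real})"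
proof -
  have "pnorm \<infinity> d x \<le> 1 \<longleftrightarrow> (\<forall>i<d. \<bar>x i\<bar> \<le> 1)" for x
    by (auto simp: pnorm_def)
  then show ?thesis by (auto simp: Bp_def space_Leb PiE_def Pi_def abs_le_iff)
qed

lemma measure_Leb_cube: "measure (Leb d) (PiE {..<d} (\<lambda>_. {-1..1::real})) = 2 ^ d"
proof -
  interpret product_sigma_finite "\<lambda>_. lborel" by standard
  have "emeasure (Leb d) (PiE {..<d} (\<lambda>_. {-1..1::real})) = (\<Prod>i<d. emeasure lborel {-1..1::real})"
    unfolding Leb_def by (intro emeasure_PiM) auto
  then show ?thesis by (simp add: measure_def ennreal_power[symmetric])
qed

lemma nn_integral_quadratic_cube:
  "(\<integral>\<^sup>+x. ennreal (indicator (PiE {..<d} (\<lambda>_. {-1..1::real})) x * (\<Sum>i<d. x i * \<theta> i)\<^sup>2) \<partial>Leb d)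
    = ennreal ((\<Sum>i<d. (\<theta> i)\<^sup>2) * (2 / 3) * 2 ^ (d - 1))"
proof -
  have "(\<integral>\<^sup>+x. ennreal (indicator (PiE {..<d} (\<lambda>_. {-1..1::real})) x * (\<Sum>i<d. x i * \<theta> i)\<^sup>2) \<partial>Leb d)
      = (\<integral>\<^sup>+x. ennreal ((\<Prod>k<d. indicator {-1..1} (x k)) * (\<Sum>i<d. x i * \<theta> i)\<^sup>2) \<partial>Leb d)"
  proof (rule nn_integral_cong)
    fix x assume "x \<in> space (Leb d)"
    then have "x \<in> extensional {..<d}" by (simp add: space_Leb PiE_iff)
    then show "ennreal (indicator (PiE {..<d} (\<lambda>_. {-1..1::real})) x * (\<Sum>i<d. x i * \<theta> i)\<^sup>2)
        = ennreal ((\<Prod>k<d. indicator {-1..1} (x k)) * (\<Sum>i<d. x i * \<theta> i)\<^sup>2)"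
      by (simp add: indicator_PiE_eq_prod)
  qed
  also have "\<dots> = ennreal ((\<Sum>i<d. (\<theta> i)\<^sup>2) * (2 / 3) * 2 ^ (d - 1))"
  proof -
    have m2: "(LINT t|lborel. indicator {-1..1} t * t\<^sup>2) = (2 / 3 :: real)"
      using integral_indicator_Icc_power[of 2] by simp
    show ?thesis
      using integral_indicator_Icc_power[of 0] integral_indicator_Icc_power[of 1]
      by (subst nn_integral_prod_weight_quadratic) (simp_all add: m2 integrable_indicator_Icc_power)
  qed
  finally show ?thesis .
qed

lemma isotropic_ratio_Dp_infinity_le:
  assumes d: "d > 0"
  shows "rad d (Dp d \<infinity>) / (sqrt (real d) * isotropic_constant d (Dp d \<infinity>)) \<le> sqrt 3"
proof -
  define Q where "Q = PiE {..<d} (\<lambda>_. {-1..1::real})"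
  have Q: "Q \<in> sets (Leb d)"
    unfolding Q_def Leb_def by (intro sets_PiM_I_finite) auto
  have radius: "(\<Sum>i<d. (x i)\<^sup>2) \<le> (sqrt (real d))\<^sup>2" if "x \<in> Q" for x
  proof -
    have "(x i)\<^sup>2 \<le> 1" if "i < d" for i
    proof -
      have "x i \<in> {-1..1}" using PiE_mem[OF \<open>x \<in> Q\<close>[unfolded Q_def]] that by simp
      then show ?thesis by (simp add: abs_square_le_1 abs_le_iff)
    qed
    then have "(\<Sum>i<d. (x i)\<^sup>2) \<le> (\<Sum>i<d. 1)" by (intro sum_mono) simp
    then show ?thesis by simp
  qed
  have "rad d (Dp d \<infinity>) / (sqrt (real d) * isotropic_constant d (Dp d \<infinity>))
      \<le> sqrt (real d) * sqrt (measure (Leb d) Q / (real d * (2 / 3 * 2 ^ (d - 1))))"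
    unfolding Dp_eq_volume_normalized Bp_infinity Q_def[symmetric]
    by (rule isotropic_ratio_volume_normalized_le[OF d Q _ _ _ _ radius])
      (simp_all add: Q_def measure_Leb_cube nn_integral_quadratic_cube)
  also have "measure (Leb d) Q / (real d * (2 / 3 * 2 ^ (d - 1))) = 3 / real d"
  proof -
    have "(2::real) ^ d = 2 * 2 ^ (d - 1)" using d by (cases d) auto
    then show ?thesis using d by (simp add: Q_def measure_Leb_cube field_simps)
  qed
  also have "sqrt (real d) * sqrt (3 / real d) = sqrt 3"
    using d by (simp add: real_sqrt_mult[symmetric])
  finally show ?thesis .
qed

section \<open>Layer cake for \<open>\<parallel>x\<parallel>\<^sub>r\<^sup>r\<close>\<close>

definition pnorm_pow :: "real \<Rightarrow> nat \<Rightarrow> (nat \<Rightarrow> real) \<Rightarrow> real" where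
  "pnorm_pow r d x = (\<Sum>i<d. \<bar>x i\<bar> powr r)"

lemma pnorm_pow_nonneg: "pnorm_pow r d x \<ge> 0"
  by (simp add: pnorm_pow_def sum_nonneg)

lemma measurable_pnorm_pow [measurable]: "pnorm_pow r d \<in> borel_measurable (Leb d)"
  unfolding pnorm_pow_def Leb_def by measurable

lemma pnorm_pow_dilate: "l > 0 \<Longrightarrow> pnorm_pow r d (dilate d l x) = l powr r * pnorm_pow r d x"
  by (simp add: pnorm_pow_def abs_mult powr_mult sum_distrib_left)

lemma abs_powr_le_1_iff: "r > 0 \<Longrightarrow> \<bar>t\<bar> powr r \<le> 1 \<longleftrightarrow> \<bar>t\<bar> \<le> 1"
  for r t :: real
  by (smt (verit) gr_one_powr powr_le1)

lemma Bp_ereal: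
  assumes r: "r > 0"
  shows "Bp d (ereal r) = {x \<in> space (Leb d). pnorm_pow r d x \<le> 1}"
proof -
  have "pnorm (ereal r) d x = \<bar>pnorm_pow r d x\<bar> powr (1 / r)" for x
    by (simp add: pnorm_def pnorm_pow_def abs_of_nonneg sum_nonneg)
  then have "pnorm (ereal r) d x \<le> 1 \<longleftrightarrow> pnorm_pow r d x \<le> 1" for x
    using r abs_powr_le_1_iff[of "1 / r" "pnorm_pow r d x"] pnorm_pow_nonneg[of r d x] by simp
  then show ?thesis by (simp add: Bp_def)
qed

lemma nn_integral_exp_minus_atLeast:
  "(\<integral>\<^sup>+s. ennreal (exp (- s)) * indicator {a..} s \<partial>lborel) = ennreal (exp (- a))"
proof -
  have "((\<lambda>s::real. exp (- s)) \<longlongrightarrow> 0) at_top"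
    by (rule filterlim_compose[OF exp_at_bot filterlim_uminus_at_bot_at_top])
  then have lim: "((\<lambda>s::real. - exp (- s)) \<longlongrightarrow> 0) at_top"
    by (intro tendsto_minus_cancel_left[THEN iffD1]) simp
  have "((\<lambda>s. - exp (- s)) has_real_derivative exp (- x)) (at x)" for x :: real
    by (auto intro!: derivative_eq_intros)
  from nn_integral_FTC_atLeast[of "\<lambda>s. exp (- s)", OF _ this _ lim] show ?thesis by simp
qed

lemma nn_integral_pnorm_pow_sublevel:
  fixes r k s :: real and g :: "(nat \<Rightarrow> real) \<Rightarrow> real"
  assumes r: "r > 0" and s: "s > 0" and g [measurable]: "g \<in> borel_measurable (Leb d)"
    and hom: "\<And>l x. l > 0 \<Longrightarrow> g (dilate d l x) = l powr k * g x"
  shows "(\<integral>\<^sup>+x. ennreal (if pnorm_pow r d x \<le> s then g x else 0) \<partial>Leb d)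
       = ennreal (s powr ((real d + k) / r))
         * (\<integral>\<^sup>+x. ennreal (if pnorm_pow r d x \<le> 1 then g x else 0) \<partial>Leb d)"
proof -
  define l where "l = s powr (1 / r)"
  have l: "l > 0" using s by (simp add: l_def)
  have l_powr: "l powr r = s" using s r by (simp add: l_def powr_powr)
  have "(\<integral>\<^sup>+x. ennreal (if pnorm_pow r d x \<le> s then g x else 0) \<partial>Leb d)
      = ennreal (l ^ d) * (\<integral>\<^sup>+x. ennreal (if pnorm_pow r d (dilate d l x) \<le> s
          then g (dilate d l x) else 0) \<partial>Leb d)"
    by (rule nn_integral_Leb_dilate[OF l]) measurable
  also have "(\<integral>\<^sup>+x. ennreal (if pnorm_pow r d (dilate d l x) \<le> s then g (dilate d l x) else 0) \<partial>Leb d)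
      = (\<integral>\<^sup>+x. ennreal (l powr k) * ennreal (if pnorm_pow r d x \<le> 1 then g x else 0) \<partial>Leb d)"
    using l s by (intro nn_integral_cong)
      (simp add: pnorm_pow_dilate l_powr hom ennreal_mult'[symmetric] ennreal_mult[symmetric])
  also have "\<dots> = ennreal (l powr k) * (\<integral>\<^sup>+x. ennreal (if pnorm_pow r d x \<le> 1 then g x else 0) \<partial>Leb d)"
    by (rule nn_integral_cmult) measurable
  also have "ennreal (l ^ d) * (ennreal (l powr k) * (\<integral>\<^sup>+x. ennreal (if pnorm_pow r d x \<le> 1 then g x else 0) \<partial>Leb d))
      = ennreal (l ^ d * l powr k) * (\<integral>\<^sup>+x. ennreal (if pnorm_pow r d x \<le> 1 then g x else 0) \<partial>Leb d)"
    using l by (simp add: ennreal_mult mult.assoc)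
  also have "l ^ d * l powr k = s powr ((real d + k) / r)"
    using l s r
    by (simp add: l_def powr_realpow[symmetric] powr_add[symmetric] powr_powr add_divide_distrib)
  finally show ?thesis .
qed

lemma ennreal_exp_minus_mult_eq_nn_integral:
  fixes a b :: real assumes b: "b \<ge> 0"
  shows "ennreal (exp (- a) * b) = (\<integral>\<^sup>+s. ennreal (if a \<le> s then exp (- s) * b else 0) \<partial>lborel)"
proof -
  have "(\<integral>\<^sup>+s. ennreal (if a \<le> s then exp (- s) * b else 0) \<partial>lborel)
      = (\<integral>\<^sup>+s. ennreal (exp (- s)) * indicator {a..} s * ennreal b \<partial>lborel)"
    using b by (intro nn_integral_cong) (simp add: ennreal_mult' indicator_def)
  also have "\<dots> = ennreal (exp (- a)) * ennreal b"
    by (simp add: nn_integral_multc nn_integral_exp_minus_atLeast)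
  finally show ?thesis using b by (simp add: ennreal_mult')
qed

lemma nn_integral_exp_minus_pnorm_pow_sublevel:
  fixes r k s :: real and g :: "(nat \<Rightarrow> real) \<Rightarrow> real"
  assumes r: "r > 0" and s: "s \<noteq> 0" and g [measurable]: "g \<in> borel_measurable (Leb d)"
    and hom: "\<And>l x. l > 0 \<Longrightarrow> g (dilate d l x) = l powr k * g x"
  shows "(\<integral>\<^sup>+x. ennreal (if pnorm_pow r d x \<le> s then exp (- s) * g x else 0) \<partial>Leb d)
       = ennreal (indicator {0..} s * s powr ((real d + k) / r) / exp s)
         * (\<integral>\<^sup>+x. ennreal (if pnorm_pow r d x \<le> 1 then g x else 0) \<partial>Leb d)"
proof (cases "s > 0")
  case True
  have "(\<integral>\<^sup>+x. ennreal (if pnorm_pow r d x \<le> s then exp (- s) * g x else 0) \<partial>Leb d)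
      = (\<integral>\<^sup>+x. ennreal (exp (- s)) * ennreal (if pnorm_pow r d x \<le> s then g x else 0) \<partial>Leb d)"
    by (intro nn_integral_cong) (simp add: ennreal_mult'[symmetric])
  also have "\<dots> = ennreal (exp (- s)) * (\<integral>\<^sup>+x. ennreal (if pnorm_pow r d x \<le> s then g x else 0) \<partial>Leb d)"
    by (rule nn_integral_cmult) measurable
  also have "\<dots> = ennreal (exp (- s) * s powr ((real d + k) / r))
      * (\<integral>\<^sup>+x. ennreal (if pnorm_pow r d x \<le> 1 then g x else 0) \<partial>Leb d)"
    by (simp add: nn_integral_pnorm_pow_sublevel[OF r True g hom] ennreal_mult' mult.assoc)
  finally show ?thesis using True by (simp add: exp_minus field_simps)
next
  case False
  then have "\<not> pnorm_pow r d x \<le> s" for x using s pnorm_pow_nonneg[of r d x] by linarith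
  then show ?thesis using False s by simp
qed

text \<open>Write \<open>exp (- N x) = \<integral>\<^sub>s\<^sub>\<ge>\<^sub>N\<^sub>x exp (- s) ds\<close> with \<open>N = pnorm_pow r d\<close> and exchange the
  integrals: the sublevel set \<open>{N \<le> s}\<close> is the unit one dilated by \<open>s powr (1 / r)\<close>, which
  contributes \<open>s powr ((d + k) / r)\<close>, and the remaining \<open>s\<close>-integral is a Gamma integral.\<close>
lemma nn_integral_exp_minus_pnorm_pow:
  fixes r k :: real and g :: "(nat \<Rightarrow> real) \<Rightarrow> real"
  assumes r: "r > 0" and k: "k \<ge> 0"
    and g [measurable]: "g \<in> borel_measurable (Leb d)" and g_nonneg: "\<And>x. g x \<ge> 0"
    and hom: "\<And>l x. l > 0 \<Longrightarrow> g (dilate d l x) = l powr k * g x"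
  shows "(\<integral>\<^sup>+x. ennreal (exp (- pnorm_pow r d x) * g x) \<partial>Leb d)
       = ennreal (Gamma ((real d + k) / r + 1))
         * (\<integral>\<^sup>+x. ennreal (if pnorm_pow r d x \<le> 1 then g x else 0) \<partial>Leb d)"
proof -
  interpret L: finite_product_sigma_finite "\<lambda>_. lborel" "{..<d}" by standard simp
  interpret P: pair_sigma_finite "Leb d" lborel
    unfolding Leb_def by (intro pair_sigma_finite.intro L.sigma_finite_measure_axioms
      lborel.sigma_finite_measure_axioms)
  define K where "K = (\<integral>\<^sup>+x. ennreal (if pnorm_pow r d x \<le> 1 then g x else 0) \<partial>Leb d)"
  define c where "c = (real d + k) / r"
  have "(\<integral>\<^sup>+x. ennreal (exp (- pnorm_pow r d x) * g x) \<partial>Leb d)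
      = (\<integral>\<^sup>+x. \<integral>\<^sup>+s. ennreal (if pnorm_pow r d x \<le> s then exp (- s) * g x else 0) \<partial>lborel \<partial>Leb d)"
    by (simp add: ennreal_exp_minus_mult_eq_nn_integral g_nonneg)
  also have "\<dots> = (\<integral>\<^sup>+s. \<integral>\<^sup>+x. ennreal (if pnorm_pow r d x \<le> s then exp (- s) * g x else 0) \<partial>Leb d \<partial>lborel)"
    by (rule P.Fubini'[symmetric]) measurable
  also have "\<dots> = (\<integral>\<^sup>+s. ennreal (indicator {0..} s * s powr c / exp s) * K \<partial>lborel)"
    using AE_lborel_singleton[of 0] unfolding K_def c_def
    by (intro nn_integral_cong_AE) (auto elim!: eventually_mono
      simp: nn_integral_exp_minus_pnorm_pow_sublevel[OF r _ g hom])
  also have "\<dots> = (\<integral>\<^sup>+s. ennreal (indicator {0..} s * s powr c / exp s) \<partial>lborel) * K"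
    by (rule nn_integral_multc) measurable
  also have "\<dots> = ennreal (Gamma (c + 1)) * K"
    using r k by (subst Gamma_conv_nn_integral_real) (auto simp: c_def intro!: add_nonneg_pos)
  finally show ?thesis by (simp add: K_def c_def)
qed

definition exp_weight :: "real \<Rightarrow> real \<Rightarrow> real" where
  "exp_weight r t = exp (- (\<bar>t\<bar> powr r))"

lemma exp_weight_pos: "exp_weight r t > 0"
  by (simp add: exp_weight_def)

lemma measurable_exp_weight [measurable]: "exp_weight r \<in> borel_measurable borel"
  unfolding exp_weight_def by measurable

lemma exp_minus_pnorm_pow: "exp (- pnorm_pow r d x) = (\<Prod>k<d. exp_weight r (x k))"
  by (simp add: pnorm_pow_def exp_weight_def exp_sum[symmetric] sum_negf)

lemma nn_integral_Leb_1:
  assumes [measurable]: "f \<in> borel_measurable lborel"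
  shows "(\<integral>\<^sup>+x. f (x 0) \<partial>Leb 1) = (\<integral>\<^sup>+t. f t \<partial>lborel)"
proof -
  interpret product_sigma_finite "\<lambda>_. lborel" by standard
  have "Leb 1 = PiM {0} (\<lambda>_. lborel)" by (simp add: Leb_def lessThan_Suc)
  then show ?thesis by (simp add: product_nn_integral_singleton)
qed

lemma nn_integral_exp_weight_abs_power:
  fixes r :: real assumes r: "r > 0"
  shows "(\<integral>\<^sup>+t. ennreal (exp_weight r t * \<bar>t\<bar> ^ m) \<partial>lborel)
       = ennreal (Gamma ((1 + real m) / r + 1)) * (\<integral>\<^sup>+t. ennreal (indicator {-1..1} t * \<bar>t\<bar> ^ m) \<partial>lborel)"
proof -
  have pnorm_pow_1: "pnorm_pow r 1 x = \<bar>x 0\<bar> powr r" for x by (simp add: pnorm_pow_def)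
  have g: "(\<lambda>x. \<bar>x 0\<bar> ^ m) \<in> borel_measurable (Leb 1)" unfolding Leb_def by measurable
  have "(\<integral>\<^sup>+t. ennreal (exp_weight r t * \<bar>t\<bar> ^ m) \<partial>lborel)
      = (\<integral>\<^sup>+x. ennreal (exp (- pnorm_pow r 1 x) * \<bar>x 0\<bar> ^ m) \<partial>Leb 1)"
    unfolding pnorm_pow_1 exp_weight_def by (rule nn_integral_Leb_1[symmetric]) measurable
  also have "\<dots> = ennreal (Gamma ((1 + real m) / r + 1))
      * (\<integral>\<^sup>+x. ennreal (if pnorm_pow r 1 x \<le> 1 then \<bar>x 0\<bar> ^ m else 0) \<partial>Leb 1)"
    using nn_integral_exp_minus_pnorm_pow[OF r _ g, where k = "real m"]
    by (simp add: abs_mult power_mult_distrib powr_realpow)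
  also have "(\<integral>\<^sup>+x. ennreal (if pnorm_pow r 1 x \<le> 1 then \<bar>x 0\<bar> ^ m else 0) \<partial>Leb 1)
      = (\<integral>\<^sup>+t. ennreal (indicator {-1..1} t * \<bar>t\<bar> ^ m) \<partial>lborel)"
    unfolding pnorm_pow_1 using r
    by (subst nn_integral_Leb_1)
      (auto simp: abs_powr_le_1_iff indicator_def abs_le_iff intro!: nn_integral_cong)
  finally show ?thesis .
qed

lemma integrable_exp_weight_power:
  fixes r :: real assumes r: "r > 0"
  shows "integrable lborel (\<lambda>t. exp_weight r t * t ^ n)"
proof -
  have "(\<integral>\<^sup>+t. ennreal (indicator {-1..1} t * \<bar>t\<bar> ^ n) \<partial>lborel) < \<infinity>"
    using integrable_indicator_Icc_power[of n] by (simp add: integrable_iff_bounded abs_mult power_abs)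
  then have "(\<integral>\<^sup>+t. ennreal (exp_weight r t * \<bar>t\<bar> ^ n) \<partial>lborel) < \<infinity>"
    by (simp add: nn_integral_exp_weight_abs_power[OF r] ennreal_mult_less_top)
  then show ?thesis
    by (simp add: integrable_iff_bounded abs_mult power_abs abs_of_pos[OF exp_weight_pos])
qed

lemma integral_exp_weight_even_power:
  fixes r :: real assumes r: "r > 0" and n: "even n"
  shows "(LINT t|lborel. exp_weight r t * t ^ n) = 2 / (real n + 1) * Gamma ((1 + real n) / r + 1)"
proof -
  have abs_power: "\<bar>t\<bar> ^ n = t ^ n" for t :: real using n by (simp add: power_even_abs)
  have "(\<integral>\<^sup>+t. ennreal (indicator {-1..1} t * \<bar>t\<bar> ^ n) \<partial>lborel) = ennreal (2 / (real n + 1))"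
    using integral_indicator_Icc_power[of n] integrable_indicator_Icc_power[of n] n
    by (subst nn_integral_eq_integral) (auto simp: abs_power)
  then have "(\<integral>\<^sup>+t. ennreal (exp_weight r t * t ^ n) \<partial>lborel)
      = ennreal (Gamma ((1 + real n) / r + 1)) * ennreal (2 / (real n + 1))"
    using nn_integral_exp_weight_abs_power[OF r, of n] by (simp add: abs_power)
  moreover have "Gamma ((1 + real n) / r + 1) > 0"
    using r by (intro Gamma_real_pos) (simp add: add_nonneg_pos)
  ultimately show ?thesis
    using exp_weight_pos[of r] n
    by (subst integral_eq_nn_integral)
      (auto intro!: AE_I2 mult_nonneg_nonneg less_imp_le[OF exp_weight_pos]
        simp: enn2real_mult zero_le_even_power)
qed

lemma lborel_integral_odd:
  fixes f :: "real \<Rightarrow> real"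
  assumes "\<And>t. f (- t) = - f t"
  shows "(LINT t|lborel. f t) = 0"
proof -
  have "(LINT t|lborel. f t) = \<bar>-1\<bar> *\<^sub>R (LINT t|lborel. f (0 + (-1) * t))"
    by (rule lborel_integral_real_affine) simp
  also have "\<dots> = - (LINT t|lborel. f t)" by (simp add: assms)
  finally show ?thesis by simp
qed

lemma integral_exp_weight_odd: "(LINT t|lborel. exp_weight r t * t) = 0"
  by (rule lborel_integral_odd) (simp add: exp_weight_def)

section \<open>The \<open>\<ell>\<^sub>r\<close> ball\<close>

lemma sets_Bp_ereal: "r > 0 \<Longrightarrow> Bp d (ereal r) \<in> sets (Leb d)"
  by (simp add: Bp_ereal)

lemma emeasure_Bp_ereal:
  fixes r :: real assumes r: "r > 0"
  shows "emeasure (Leb d) (Bp d (ereal r)) = ennreal ((2 * Gamma (1 / r + 1)) ^ d / Gamma (real d / r + 1))"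
proof -
  interpret product_sigma_finite "\<lambda>_. lborel" by standard
  have Gamma_pos: "Gamma (1 / r + 1) > 0" "Gamma (real d / r + 1) > 0"
    using r by (auto intro!: Gamma_real_pos add_nonneg_pos)
  have weight: "(\<integral>\<^sup>+t. ennreal (exp_weight r t) \<partial>lborel) = ennreal (2 * Gamma (1 / r + 1))"
    using integral_exp_weight_even_power[OF r, of 0] integrable_exp_weight_power[OF r, of 0]
    by (subst nn_integral_eq_integral) (auto simp: less_imp_le[OF exp_weight_pos])
  have "(\<integral>\<^sup>+x. ennreal (exp (- pnorm_pow r d x) * 1) \<partial>Leb d)
      = (\<integral>\<^sup>+x. (\<Prod>k<d. ennreal (exp_weight r (x k))) \<partial>Leb d)"
    by (simp add: exp_minus_pnorm_pow prod_ennreal less_imp_le[OF exp_weight_pos])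
  also have "\<dots> = (\<Prod>k<d. \<integral>\<^sup>+t. ennreal (exp_weight r t) \<partial>lborel)"
    unfolding Leb_def by (rule product_nn_integral_prod) auto
  also have "\<dots> = ennreal ((2 * Gamma (1 / r + 1)) ^ d)"
    using Gamma_pos by (simp add: weight ennreal_power)
  finally have product: "(\<integral>\<^sup>+x. ennreal (exp (- pnorm_pow r d x) * 1) \<partial>Leb d)
      = ennreal ((2 * Gamma (1 / r + 1)) ^ d)" .
  have "(\<integral>\<^sup>+x. ennreal (if pnorm_pow r d x \<le> 1 then 1 else 0) \<partial>Leb d) = emeasure (Leb d) (Bp d (ereal r))"
    by (subst nn_integral_indicator[OF sets_Bp_ereal[OF r], symmetric], intro nn_integral_cong)
      (simp add: Bp_ereal[OF r])
  then show ?thesis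
    using nn_integral_exp_minus_pnorm_pow[OF r order_refl, of "\<lambda>_. 1"] product Gamma_pos
    by (intro ennreal_eq_divide_of_mult_eq) auto
qed

lemma nn_integral_quadratic_Bp_ereal:
  fixes r :: real assumes r: "r > 0"
  shows "(\<integral>\<^sup>+x. ennreal (indicator (Bp d (ereal r)) x * (\<Sum>i<d. x i * \<theta> i)\<^sup>2) \<partial>Leb d)
       = ennreal ((\<Sum>i<d. (\<theta> i)\<^sup>2) * (2 / 3 * Gamma (3 / r + 1)) * (2 * Gamma (1 / r + 1)) ^ (d - 1)
           / Gamma ((real d + 2) / r + 1))"
proof -
  have Gamma_pos: "Gamma (1 / r + 1) > 0" "Gamma (3 / r + 1) > 0" "Gamma ((real d + 2) / r + 1) > 0"
    using r by (auto intro!: Gamma_real_pos add_nonneg_pos)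
  have m0: "(LINT t|lborel. exp_weight r t) = 2 * Gamma (1 / r + 1)"
    using integral_exp_weight_even_power[OF r, of 0] by simp
  have m2: "(LINT t|lborel. exp_weight r t * t\<^sup>2) = 2 / 3 * Gamma (3 / r + 1)"
    using integral_exp_weight_even_power[OF r, of 2] by simp
  have hom: "(\<Sum>i<d. dilate d l x i * \<theta> i)\<^sup>2 = l powr 2 * (\<Sum>i<d. x i * \<theta> i)\<^sup>2"
    if "l > 0" for l and x :: "nat \<Rightarrow> real"
  proof -
    have "(\<Sum>i<d. dilate d l x i * \<theta> i) = l * (\<Sum>i<d. x i * \<theta> i)"
      by (simp add: sum_distrib_left mult.assoc)
    then show ?thesis using that by (simp add: power_mult_distrib powr_numeral)
  qed
  have "(\<integral>\<^sup>+x. ennreal (if pnorm_pow r d x \<le> 1 then (\<Sum>i<d. x i * \<theta> i)\<^sup>2 else 0) \<partial>Leb d)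
      = (\<integral>\<^sup>+x. ennreal (indicator (Bp d (ereal r)) x * (\<Sum>i<d. x i * \<theta> i)\<^sup>2) \<partial>Leb d)"
    by (intro nn_integral_cong) (simp add: Bp_ereal[OF r] indicator_def)
  moreover have "(\<integral>\<^sup>+x. ennreal (exp (- pnorm_pow r d x) * (\<Sum>i<d. x i * \<theta> i)\<^sup>2) \<partial>Leb d)
      = ennreal ((\<Sum>i<d. (\<theta> i)\<^sup>2) * (2 / 3 * Gamma (3 / r + 1)) * (2 * Gamma (1 / r + 1)) ^ (d - 1))"
    by (simp add: m0 m2 exp_minus_pnorm_pow nn_integral_prod_weight_quadratic
      less_imp_le[OF exp_weight_pos] integrable_exp_weight_power[OF r] integral_exp_weight_odd)
  ultimately show ?thesis
    using nn_integral_exp_minus_pnorm_pow[OF r, where k = 2 and g = "\<lambda>x. (\<Sum>i<d. x i * \<theta> i)\<^sup>2"]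
      hom Gamma_pos
    by (intro ennreal_eq_divide_of_mult_eq) (auto intro!: mult_nonneg_nonneg sum_nonneg)
qed

lemma sum_power2_le_of_pnorm_pow_le_1:
  fixes r :: real and x :: "nat \<Rightarrow> real"
  assumes r: "r \<ge> 2" and d: "d > 0" and x: "pnorm_pow r d x \<le> 1"
  shows "(\<Sum>i<d. (x i)\<^sup>2) \<le> real d powr (1 - 2 / r)"
proof -
  have young: "real d powr (2 / r) * (x i)\<^sup>2 \<le> 2 / r * (real d * \<bar>x i\<bar> powr r) + (1 - 2 / r)" for i
  proof (cases "x i = 0")
    case False
    have "(real d * \<bar>x i\<bar> powr r) powr (2 / r) * 1 powr (1 - 2 / r)
        \<le> 2 / r * (real d * \<bar>x i\<bar> powr r) + (1 - 2 / r) * 1"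
      using r d False by (intro Youngs_inequality_0) auto
    moreover have "(real d * \<bar>x i\<bar> powr r) powr (2 / r) = real d powr (2 / r) * (x i)\<^sup>2"
      using r d False by (simp add: powr_mult powr_powr powr_realpow[symmetric])
    ultimately show ?thesis by simp
  qed (use r in simp)
  have "real d powr (2 / r) * (\<Sum>i<d. (x i)\<^sup>2)
      \<le> (\<Sum>i<d. 2 / r * (real d * \<bar>x i\<bar> powr r) + (1 - 2 / r))"
    unfolding sum_distrib_left by (intro sum_mono young)
  also have "\<dots> = 2 / r * real d * pnorm_pow r d x + real d * (1 - 2 / r)"
    by (simp add: pnorm_pow_def sum.distrib sum_distrib_left mult.assoc)
  also have "\<dots> \<le> real d"
    using x r mult_left_mono[OF x, of "2 / r * real d"] by (simp add: algebra_simps)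
  finally have "real d powr (2 / r) * (\<Sum>i<d. (x i)\<^sup>2) \<le> real d" .
  then have "(\<Sum>i<d. (x i)\<^sup>2) \<le> real d / real d powr (2 / r)"
    using d by (simp add: field_simps)
  also have "\<dots> = real d powr (1 - 2 / r)" using d by (simp add: powr_diff)
  finally show ?thesis .
qed

section \<open>Gamma quotients\<close>

lemma Gamma_add_le_powr:
  fixes z s :: real assumes z: "z > 0" and s: "0 \<le> s" "s \<le> 1"
  shows "Gamma (z + s) \<le> Gamma z * z powr s"
proof -
  have "ln (Gamma ((1 - s) * z + s * (z + 1))) \<le> (1 - s) * ln (Gamma z) + s * ln (Gamma (z + 1))"
    using convex_onD[OF log_convex_Gamma_real, of s z "z + 1"] z s by simp
  also have "Gamma (z + 1) = z * Gamma z"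
    using z by (intro Gamma_plus1) (auto elim!: nonpos_Ints_cases)
  finally have "ln (Gamma (z + s)) \<le> ln (Gamma z) + s * ln z"
    using z Gamma_real_pos[OF z] by (simp add: ln_mult algebra_simps)
  moreover have "Gamma (z + s) = exp (ln (Gamma (z + s)))"
    using z s Gamma_real_pos[of "z + s"] by simp
  ultimately have "Gamma (z + s) \<le> exp (ln (Gamma z) + s * ln z)"
    by (metis exp_le_cancel_iff)
  also have "\<dots> = Gamma z * z powr s"
    using z Gamma_real_pos[OF z] by (simp add: exp_add powr_def mult.commute)
  finally show ?thesis .
qed

lemma powr_mult_Gamma_le_Gamma_add:
  fixes a s :: real assumes a: "a > 0" and s: "0 \<le> s" "s \<le> 1"
  shows "a powr s * Gamma (a + 1) \<le> Gamma (a + 1 + s)"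
proof -
  have "a powr s * (a + 1 + s) powr (1 - s) \<le> s * a + (1 - s) * (a + 1 + s)"
    using a s by (intro Youngs_inequality_0) auto
  also have "\<dots> \<le> a + 1" using s by (simp add: algebra_simps power2_eq_square[symmetric])
  finally have young: "a powr s * (a + 1 + s) powr (1 - s) \<le> a + 1" .
  have "(a powr s * Gamma (a + 1)) * (a + 1 + s) powr (1 - s)
      = (a powr s * (a + 1 + s) powr (1 - s)) * Gamma (a + 1)"
    by (simp add: mult_ac)
  also have "\<dots> \<le> (a + 1) * Gamma (a + 1)"
    using young a by (intro mult_right_mono) (auto intro: less_imp_le Gamma_real_pos)
  also have "\<dots> = Gamma (a + 1 + 1)"
    using a by (intro Gamma_plus1[symmetric]) (auto elim!: nonpos_Ints_cases)
  also have "\<dots> = Gamma (a + 1 + s + (1 - s))"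
    by simp
  also have "\<dots> \<le> Gamma (a + 1 + s) * (a + 1 + s) powr (1 - s)"
    using a s by (intro Gamma_add_le_powr) auto
  finally show ?thesis using a s by (simp add: mult_le_cancel_right)
qed

lemma Gamma_ratio_product_le:
  fixes a x :: real assumes a: "0 < a" "a \<le> 1 / 2" and x: "x > 0"
  shows "Gamma (a + 1) / Gamma (3 * a + 1) * (Gamma (x + 2 * a + 1) / Gamma (x + 1))
       \<le> ((x + 1) / a) powr (2 * a)"
proof -
  have Gamma_pos: "Gamma (a + 1) > 0" "Gamma (3 * a + 1) > 0" "Gamma (x + 1) > 0"
    using a x by (auto intro!: Gamma_real_pos)
  have "a powr (2 * a) * Gamma (a + 1) \<le> Gamma (3 * a + 1)"
    using powr_mult_Gamma_le_Gamma_add[of a "2 * a"] a by (simp add: add_ac)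
  then have "Gamma (a + 1) / Gamma (3 * a + 1) \<le> 1 / a powr (2 * a)"
    using a Gamma_pos by (simp add: field_simps)
  moreover have "Gamma (x + 2 * a + 1) \<le> Gamma (x + 1) * (x + 1) powr (2 * a)"
    using Gamma_add_le_powr[of "x + 1" "2 * a"] a x by (simp add: add_ac)
  then have "Gamma (x + 2 * a + 1) / Gamma (x + 1) \<le> (x + 1) powr (2 * a)"
    using Gamma_pos by (simp add: field_simps)
  moreover have "Gamma (x + 2 * a + 1) > 0" using a x by (intro Gamma_real_pos) simp
  ultimately have "Gamma (a + 1) / Gamma (3 * a + 1) * (Gamma (x + 2 * a + 1) / Gamma (x + 1))
      \<le> 1 / a powr (2 * a) * (x + 1) powr (2 * a)"
    using Gamma_pos by (intro mult_mono) auto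
  also have "\<dots> = ((x + 1) / a) powr (2 * a)" using a x by (simp add: powr_divide)
  finally show ?thesis .
qed

lemma pnorm_ball_Gamma_ratio_le:
  fixes r :: real assumes r: "r \<ge> 2" and d: "d > 0"
  shows "real d powr (1 - 2 / r) * ((2 * Gamma (1 / r + 1)) ^ d / Gamma (real d / r + 1)
      / (real d * (2 / 3 * Gamma (3 / r + 1) * (2 * Gamma (1 / r + 1)) ^ (d - 1) / Gamma ((real d + 2) / r + 1))))
    \<le> 3 * (1 + r / real d) powr (2 / r)"
proof -
  define a where "a = 1 / r"
  define x where "x = real d / r"
  have a: "0 < a" "a \<le> 1 / 2" and x: "x > 0" using r d by (auto simp: a_def x_def)
  have pos: "Gamma (a + 1) > 0" "Gamma (3 * a + 1) > 0" "Gamma (x + 1) > 0" "Gamma (x + 2 * a + 1) > 0"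
    using a x by (auto intro!: Gamma_real_pos)
  have "(2 * Gamma (a + 1)) ^ d = 2 * Gamma (a + 1) * (2 * Gamma (a + 1)) ^ (d - 1)"
    using d by (cases d) auto
  moreover have "real d powr (1 - 2 / r) = real d / real d powr (2 * a)"
    using d by (simp add: powr_diff a_def)
  moreover have r_eq: "(real d + 2) / r = x + 2 * a" "3 / r = 3 * a" "real d / r = x" "1 / r = a"
    by (simp_all add: a_def x_def add_divide_distrib)
  ultimately have "real d powr (1 - 2 / r) * ((2 * Gamma (1 / r + 1)) ^ d / Gamma (real d / r + 1)
      / (real d * (2 / 3 * Gamma (3 / r + 1) * (2 * Gamma (1 / r + 1)) ^ (d - 1) / Gamma ((real d + 2) / r + 1))))
    = 3 * (Gamma (a + 1) / Gamma (3 * a + 1) * (Gamma (x + 2 * a + 1) / Gamma (x + 1))) / real d powr (2 * a)"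
    unfolding r_eq using d pos by (simp add: field_simps)
  also have "\<dots> \<le> 3 * ((x + 1) / a) powr (2 * a) / real d powr (2 * a)"
    by (intro divide_right_mono mult_left_mono Gamma_ratio_product_le[OF a x]) auto
  also have "\<dots> = 3 * ((x + 1) / a / real d) powr (2 * a)"
    using a x by (simp add: powr_divide powr_mult)
  also have "(x + 1) / a / real d = 1 + r / real d"
    using d r by (simp add: x_def a_def field_simps)
  finally show ?thesis by (simp add: a_def)
qed

lemma isotropic_ratio_Dp_ereal_le:
  fixes r :: real assumes r: "r \<ge> 2" and d: "d > 0"
  shows "rad d (Dp d (ereal r)) / (sqrt (real d) * isotropic_constant d (Dp d (ereal r)))
      \<le> sqrt 3 * (1 + r / real d) powr (1 / r)"
proof -
  define B where "B = Bp d (ereal r)"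
  define V where "V = (2 * Gamma (1 / r + 1)) ^ d / Gamma (real d / r + 1)"
  define J where "J = 2 / 3 * Gamma (3 / r + 1) * (2 * Gamma (1 / r + 1)) ^ (d - 1) / Gamma ((real d + 2) / r + 1)"
  have pos: "Gamma (1 / r + 1) > 0" "Gamma (3 / r + 1) > 0" "Gamma (real d / r + 1) > 0"
    "Gamma ((real d + 2) / r + 1) > 0"
    using r by (auto intro!: Gamma_real_pos add_nonneg_pos)
  have B: "B \<in> sets (Leb d)" using r by (simp add: B_def sets_Bp_ereal)
  have volume: "measure (Leb d) B = V"
    using emeasure_Bp_ereal[of r d] r pos by (simp add: measure_def B_def V_def)
  have moment: "(\<integral>\<^sup>+y. ennreal (indicator B y * (\<Sum>i<d. y i * \<theta> i)\<^sup>2) \<partial>Leb d) = ennreal J"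
    if "(\<Sum>i<d. (\<theta> i)\<^sup>2) = 1" for \<theta>
    using nn_integral_quadratic_Bp_ereal[of r d \<theta>] r that by (simp add: B_def J_def)
  have radius: "(\<Sum>i<d. (y i)\<^sup>2) \<le> (sqrt (real d powr (1 - 2 / r)))\<^sup>2" if "y \<in> B" for y
    using sum_power2_le_of_pnorm_pow_le_1[OF r d] that r by (simp add: B_def Bp_ereal)
  have "sqrt ((1 + r / real d) powr (2 / r)) = (1 + r / real d) powr (1 / r)"
    using powr_half_sqrt_powr[of "1 + r / real d" "2 / r"] r by simp
  then have "sqrt (real d powr (1 - 2 / r)) * sqrt (V / (real d * J)) \<le> sqrt 3 * (1 + r / real d) powr (1 / r)"
    using real_sqrt_le_mono[OF pnorm_ball_Gamma_ratio_le[OF r d]]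
    by (simp only: real_sqrt_mult V_def J_def)
  moreover have "rad d (Dp d (ereal r)) / (sqrt (real d) * isotropic_constant d (Dp d (ereal r)))
      \<le> sqrt (real d powr (1 - 2 / r)) * sqrt (V / (real d * J))"
    unfolding Dp_eq_volume_normalized B_def[symmetric] volume[symmetric] using pos volume
    by (intro isotropic_ratio_volume_normalized_le[OF d B _ _ moment _ radius])
      (simp_all add: J_def V_def)
  ultimately show ?thesis by linarith
qed

theorem lemma3p2:
  fixes p :: ereal
  assumes "2 \<le> p"
  shows "limsup (\<lambda>d. ereal (rad d (Dp d p) / (sqrt (real d) * isotropic_constant d (Dp d p))))
           \<le> ereal (sqrt 3)"
proof (cases "p = \<infinity>")
  case True
  have "eventually (\<lambda>d. ereal (rad d (Dp d p) / (sqrt (real d) * isotropic_constant d (Dp d p)))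
      \<le> ereal (sqrt 3)) sequentially"
    using eventually_gt_at_top[of 0] by eventually_elim (simp add: True isotropic_ratio_Dp_infinity_le)
  then show ?thesis by (rule Limsup_bounded)
next
  case False
  then obtain r where p: "p = ereal r" and r: "r \<ge> 2" using assms by (cases p) auto
  define b where "b d = sqrt 3 * (1 + r / real d) powr (1 / r)" for d :: nat
  have "eventually (\<lambda>d. ereal (rad d (Dp d p) / (sqrt (real d) * isotropic_constant d (Dp d p)))
      \<le> ereal (b d)) sequentially"
    using eventually_gt_at_top[of 0] by eventually_elim (simp add: p b_def isotropic_ratio_Dp_ereal_le[OF r])
  then have "limsup (\<lambda>d. ereal (rad d (Dp d p) / (sqrt (real d) * isotropic_constant d (Dp d p))))
      \<le> limsup (\<lambda>d. ereal (b d))" by (rule Limsup_mono)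
  also have "\<dots> = ereal (sqrt 3)"
  proof (intro lim_imp_Limsup tendsto_ereal)
    have "b \<longlonglongrightarrow> sqrt 3 * (1 + 0) powr (1 / r)"
      unfolding b_def using r by (intro tendsto_intros lim_const_over_n) auto
    then show "b \<longlonglongrightarrow> sqrt 3" by simp
  qed simp
  finally show ?thesis .
qed

end
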